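(* The logic $\mathsf{ICK}\oplus((p\to q)\to(p\mathrel{\Box\!\!\!\rightarrow} q))$ is sound and complete with respect to the class of conditional frames $(X,\leq,\mathcal{R})$ satisfying $R_a[x]\subseteq{\uparrow}x\cap a$ for all $x\in X$ and all upsets $a$.
   Context: Formulas: $\phi ::= p\mid\bot\mid\phi\wedge\phi\mid\phi\vee\phi\mid\phi\to\phi\mid\phi\mathrel{\Box\!\!\!\rightarrow}\phi$. $\mathsf{ICK}\oplus\Gamma$ is the smallest set containing intuitionistic propositional logic, $\Gamma$, $(p\mathrel{\Box\!\!\!\rightarrow}(q\wedge r))\leftrightarrow((p\mathrel{\Box\!\!\!\rightarrow} q)\wedge(p\mathrel{\Box\!\!\!\rightarrow} r))$ and $(p\mathrel{\Box\!\!\!\rightarrow}\top)\leftrightarrow\top$, closed under uniform substitution, modus ponens and congruence rules for both arguments of $\mathrel{\Box\!\!\!\rightarrow}$. A conditional frame is $(X,\leq,\mathcal{R})$, $(X,\leq)$ a nonempty preorder, $\mathcal{R}=\{R_a\mid a\text{ an upset}\}$ with $(\leq\circ R_a)\subseteq(R_a\circ\leq)$; valuations assign upsets to letters and $x\models\phi\mathrel{\Box\!\!\!\rightarrow}\psi$ iff every $y$ with $xR_{V(\phi)}y$ satisfies $\psi$. ${\uparrow}x=\{y\mid x\leq y\}$. *)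

theory Defs
  imports Main
begin

datatype fm = Var nat | Bot | And fm fm | Or fm fm | Imp fm fm | Cond fm fm

definition Top :: fm where "Top = Imp Bot Bot"
definition Iff :: "fm \<Rightarrow> fm \<Rightarrow> fm" where "Iff a b = And (Imp a b) (Imp b a)"

primrec subst :: "(nat \<Rightarrow> fm) \<Rightarrow> fm \<Rightarrow> fm" where
  "subst s (Var n) = s n"
| "subst s Bot = Bot"
| "subst s (And a b) = And (subst s a) (subst s b)"
| "subst s (Or a b) = Or (subst s a) (subst s b)"
| "subst s (Imp a b) = Imp (subst s a) (subst s b)"
| "subst s (Cond a b) = Cond (subst s a) (subst s b)"

text \<open>Intuitionistic propositional logic is given by a standard Hilbert system
(axiom schemas over the full language + modus ponens); the conditional axioms
are stated with the letters p = Var 0, q = Var 1, r = Var 2, and the set is closed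
under uniform substitution, modus ponens and the two congruence rules.\<close>

inductive_set ICK :: "fm set \<Rightarrow> fm set" for \<Gamma> :: "fm set" where
  ax_K: "Imp a (Imp b a) \<in> ICK \<Gamma>"
| ax_S: "Imp (Imp a (Imp b c)) (Imp (Imp a b) (Imp a c)) \<in> ICK \<Gamma>"
| ax_andE1: "Imp (And a b) a \<in> ICK \<Gamma>"
| ax_andE2: "Imp (And a b) b \<in> ICK \<Gamma>"
| ax_andI: "Imp a (Imp b (And a b)) \<in> ICK \<Gamma>"
| ax_orI1: "Imp a (Or a b) \<in> ICK \<Gamma>"
| ax_orI2: "Imp b (Or a b) \<in> ICK \<Gamma>"
| ax_orE: "Imp (Imp a c) (Imp (Imp b c) (Imp (Or a b) c)) \<in> ICK \<Gamma>"
| ax_efq: "Imp Bot a \<in> ICK \<Gamma>"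
| ax_Gamma: "g \<in> \<Gamma> \<Longrightarrow> g \<in> ICK \<Gamma>"
| ax_CM: "Iff (Cond (Var 0) (And (Var 1) (Var 2)))
              (And (Cond (Var 0) (Var 1)) (Cond (Var 0) (Var 2))) \<in> ICK \<Gamma>"
| ax_CN: "Iff (Cond (Var 0) Top) Top \<in> ICK \<Gamma>"
| subst_rule: "a \<in> ICK \<Gamma> \<Longrightarrow> subst s a \<in> ICK \<Gamma>"
| mp: "Imp a b \<in> ICK \<Gamma> \<Longrightarrow> a \<in> ICK \<Gamma> \<Longrightarrow> b \<in> ICK \<Gamma>"
| cong_left: "Iff a b \<in> ICK \<Gamma> \<Longrightarrow> Iff (Cond a c) (Cond b c) \<in> ICK \<Gamma>"
| cong_right: "Iff a b \<in> ICK \<Gamma> \<Longrightarrow> Iff (Cond c a) (Cond c b) \<in> ICK \<Gamma>"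

definition axImpCond :: fm where
  "axImpCond = Imp (Imp (Var 0) (Var 1)) (Cond (Var 0) (Var 1))"

text \<open>A frame is given by a carrier X, a relation le and a family R of relations
indexed by subsets; only the R a for upsets a are relevant.\<close>

definition upset :: "'w set \<Rightarrow> ('w \<Rightarrow> 'w \<Rightarrow> bool) \<Rightarrow> 'w set \<Rightarrow> bool" where
  "upset X le a \<longleftrightarrow> a \<subseteq> X \<and> (\<forall>x\<in>a. \<forall>y\<in>X. le x y \<longrightarrow> y \<in> a)"

definition cond_frame ::
  "'w set \<Rightarrow> ('w \<Rightarrow> 'w \<Rightarrow> bool) \<Rightarrow> ('w set \<Rightarrow> 'w \<Rightarrow> 'w \<Rightarrow> bool) \<Rightarrow> bool" where
  "cond_frame X le R \<longleftrightarrow>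
     X \<noteq> {} \<and>
     (\<forall>x\<in>X. le x x) \<and>
     (\<forall>x\<in>X. \<forall>y\<in>X. \<forall>z\<in>X. le x y \<longrightarrow> le y z \<longrightarrow> le x z) \<and>
     (\<forall>a. upset X le a \<longrightarrow> (\<forall>x y. R a x y \<longrightarrow> x \<in> X \<and> y \<in> X)) \<and>
     (\<forall>a. upset X le a \<longrightarrow>
        (\<forall>x\<in>X. \<forall>y\<in>X. \<forall>z\<in>X. le x y \<longrightarrow> R a y z \<longrightarrow> (\<exists>w\<in>X. R a x w \<and> le w z)))"

fun sat :: "'w set \<Rightarrow> ('w \<Rightarrow> 'w \<Rightarrow> bool) \<Rightarrow> ('w set \<Rightarrow> 'w \<Rightarrow> 'w \<Rightarrow> bool)
            \<Rightarrow> (nat \<Rightarrow> 'w set) \<Rightarrow> 'w \<Rightarrow> fm \<Rightarrow> bool" where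
  "sat X le R V x (Var n) \<longleftrightarrow> x \<in> V n"
| "sat X le R V x Bot \<longleftrightarrow> False"
| "sat X le R V x (And a b) \<longleftrightarrow> sat X le R V x a \<and> sat X le R V x b"
| "sat X le R V x (Or a b) \<longleftrightarrow> sat X le R V x a \<or> sat X le R V x b"
| "sat X le R V x (Imp a b) \<longleftrightarrow>
     (\<forall>y\<in>X. le x y \<longrightarrow> sat X le R V y a \<longrightarrow> sat X le R V y b)"
| "sat X le R V x (Cond a b) \<longleftrightarrow>
     (\<forall>y. R {z\<in>X. sat X le R V z a} x y \<longrightarrow> sat X le R V y b)"

definition valid_frame ::
  "'w set \<Rightarrow> ('w \<Rightarrow> 'w \<Rightarrow> bool) \<Rightarrow> ('w set \<Rightarrow> 'w \<Rightarrow> 'w \<Rightarrow> bool) \<Rightarrow> fm \<Rightarrow> bool" where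
  "valid_frame X le R \<phi> \<longleftrightarrow>
     (\<forall>V. (\<forall>n. upset X le (V n)) \<longrightarrow> (\<forall>x\<in>X. sat X le R V x \<phi>))"

definition impcond_frame ::
  "'w set \<Rightarrow> ('w \<Rightarrow> 'w \<Rightarrow> bool) \<Rightarrow> ('w set \<Rightarrow> 'w \<Rightarrow> 'w \<Rightarrow> bool) \<Rightarrow> bool" where
  "impcond_frame X le R \<longleftrightarrow> cond_frame X le R \<and>
     (\<forall>a. upset X le a \<longrightarrow> (\<forall>x\<in>X. \<forall>y. R a x y \<longrightarrow> le x y \<and> y \<in> a))"

definition valid_class :: "'w itself \<Rightarrow> fm \<Rightarrow> bool" where
  "valid_class _ \<phi> \<longleftrightarrow>
     (\<forall>(X::'w set) le R. impcond_frame X le R \<longrightarrow> valid_frame X le R \<phi>)"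

end

theory Submission
  imports Defs
begin

text \<open>
Soundness is an induction over derivations: truth sets are upsets (persistence), which makes
uniform substitution and the congruence rules sound, and the frame condition
\<open>R\<^sub>a[x] \<subseteq> \<up>x \<inter> a\<close> validates \<open>(p \<rightarrow> q) \<rightarrow> (p \<box>\<rightarrow> q)\<close>.

Completeness uses the canonical model whose worlds are the prime theories ordered by inclusion,
where \<open>R\<^sub>a x y\<close> holds iff \<open>x \<subseteq> y \<in> a\<close> and, whenever \<open>a\<close> is the truth set of some \<open>\<phi>\<close>, \<open>y\<close>
contains every \<open>\<theta>\<close> with \<open>\<phi> \<box>\<rightarrow> \<theta> \<in> x\<close>; the frame condition then holds by construction.
In the truth lemma, if \<open>\<phi> \<box>\<rightarrow> \<psi> \<notin> x\<close> then \<open>{\<theta>. \<phi> \<box>\<rightarrow> \<theta> \<in> x}\<close> is a theory (by CM) containing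
\<open>x\<close> and \<open>\<phi>\<close> (via \<open>(\<phi> \<rightarrow> \<theta>) \<rightarrow> (\<phi> \<box>\<rightarrow> \<theta>)\<close>), and Lindenbaum's lemma extends it, avoiding \<open>\<psi>\<close>, to a prime
theory that witnesses the failure of \<open>\<phi> \<box>\<rightarrow> \<psi>\<close>.
\<close>

section \<open>Soundness\<close>

lemma cond_frame_refl: "cond_frame X le R \<Longrightarrow> x \<in> X \<Longrightarrow> le x x"
  unfolding cond_frame_def by blast

lemma cond_frame_trans:
  "cond_frame X le R \<Longrightarrow> x \<in> X \<Longrightarrow> y \<in> X \<Longrightarrow> z \<in> X \<Longrightarrow> le x y \<Longrightarrow> le y z \<Longrightarrow> le x z"
  unfolding cond_frame_def by blast

lemma cond_frame_R_in_carrier: "cond_frame X le R \<Longrightarrow> upset X le a \<Longrightarrow> R a x y \<Longrightarrow> y \<in> X"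
  unfolding cond_frame_def by blast

lemma cond_frame_R_back:
  "cond_frame X le R \<Longrightarrow> upset X le a \<Longrightarrow> x \<in> X \<Longrightarrow> y \<in> X \<Longrightarrow> le x y \<Longrightarrow> R a y z
    \<Longrightarrow> \<exists>w\<in>X. R a x w \<and> le w z"
  unfolding cond_frame_def by blast

lemma sat_persistent:
  assumes F: "cond_frame X le R" and V: "\<forall>n. upset X le (V n)"
  shows "x \<in> X \<Longrightarrow> y \<in> X \<Longrightarrow> le x y \<Longrightarrow> sat X le R V x \<phi> \<Longrightarrow> sat X le R V y \<phi>"
proof (induction \<phi> arbitrary: x y)
  case (Var n)
  then show ?case using V unfolding upset_def by simp
next
  case (Imp a b)
  then show ?case using cond_frame_trans[OF F, of x y] by simp
next
  case (Cond a b)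
  let ?A = "{z\<in>X. sat X le R V z a}"
  have "upset X le ?A" unfolding upset_def using Cond.IH(1) by blast
  show ?case
  proof (simp only: sat.simps, intro allI impI)
    fix z assume "R ?A y z"
    then obtain w where "w \<in> X" "R ?A x w" "le w z"
      using cond_frame_R_back[OF F \<open>upset X le ?A\<close>] Cond.prems by blast
    then show "sat X le R V z b"
      using Cond.IH(2) Cond.prems(4) cond_frame_R_in_carrier[OF F \<open>upset X le ?A\<close> \<open>R ?A y z\<close>]
      by auto
  qed
qed auto

lemma upset_truth_set:
  assumes "cond_frame X le R" and "\<forall>n. upset X le (V n)"
  shows "upset X le {z\<in>X. sat X le R V z \<phi>}"
  unfolding upset_def using sat_persistent[OF assms] by blast

lemma sat_subst:
  assumes F: "cond_frame X le R" and V: "\<forall>n. upset X le (V n)"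
  shows "x \<in> X \<Longrightarrow> sat X le R V x (subst s \<phi>) \<longleftrightarrow>
     sat X le R (\<lambda>n. {z\<in>X. sat X le R V z (s n)}) x \<phi>"
proof (induction \<phi> arbitrary: x)
  case (Cond a b)
  let ?V' = "\<lambda>n. {z\<in>X. sat X le R V z (s n)}"
  let ?A = "{z\<in>X. sat X le R ?V' z a}"
  have "\<forall>n. upset X le (?V' n)"
    using upset_truth_set[OF F V] by blast
  then have "upset X le ?A"
    by (rule upset_truth_set[OF F])
  have "{z\<in>X. sat X le R V z (subst s a)} = ?A"
    using Cond.IH(1) by blast
  then have "sat X le R V x (subst s (Cond a b)) \<longleftrightarrow> (\<forall>y. R ?A x y \<longrightarrow> sat X le R V y (subst s b))"
    by simp
  also have "\<dots> \<longleftrightarrow> (\<forall>y. R ?A x y \<longrightarrow> sat X le R ?V' y b)"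
    using Cond.IH(2) cond_frame_R_in_carrier[OF F \<open>upset X le ?A\<close>] by blast
  finally show ?case by simp
qed auto

lemma valid_frameI:
  "(\<And>V x. \<forall>n. upset X le (V n) \<Longrightarrow> x \<in> X \<Longrightarrow> sat X le R V x \<phi>) \<Longrightarrow> valid_frame X le R \<phi>"
  unfolding valid_frame_def by blast

lemma valid_frameD:
  "valid_frame X le R \<phi> \<Longrightarrow> \<forall>n. upset X le (V n) \<Longrightarrow> x \<in> X \<Longrightarrow> sat X le R V x \<phi>"
  unfolding valid_frame_def by blast

lemma valid_frame_Iff_truth_set:
  assumes "cond_frame X le R" and "valid_frame X le R (Iff a b)" and "\<forall>n. upset X le (V n)"
  shows "{z\<in>X. sat X le R V z a} = {z\<in>X. sat X le R V z b}"
  using valid_frameD[OF assms(2,3)] cond_frame_refl[OF assms(1)] unfolding Iff_def by auto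

theorem valid_frame_ICK:
  assumes F: "cond_frame X le R" and "\<forall>g\<in>\<Gamma>. valid_frame X le R g" and "\<phi> \<in> ICK \<Gamma>"
  shows "valid_frame X le R \<phi>"
  using assms(3)
proof (induction rule: ICK.induct)
  case (ax_K a b) show ?case
    by (rule valid_frameI) (auto intro: sat_persistent[OF F])
next
  case (ax_S a b c)
  show ?case
  proof (rule valid_frameI, simp only: sat.simps, intro ballI impI)
    fix V :: "nat \<Rightarrow> _" and x y z w
    assume "y \<in> X" "z \<in> X" "w \<in> X" "le y z" "le z w" "sat X le R V w a"
      and "\<forall>u\<in>X. le y u \<longrightarrow> sat X le R V u a \<longrightarrow>
             (\<forall>v\<in>X. le u v \<longrightarrow> sat X le R V v b \<longrightarrow> sat X le R V v c)"
      and "\<forall>u\<in>X. le z u \<longrightarrow> sat X le R V u a \<longrightarrow> sat X le R V u b"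
    then show "sat X le R V w c"
      using cond_frame_refl[OF F, of w] cond_frame_trans[OF F, of y z w] by blast
  qed
next
  case (ax_andE1 a b) show ?case by (rule valid_frameI) simp
next
  case (ax_andE2 a b) show ?case by (rule valid_frameI) simp
next
  case (ax_andI a b) show ?case
    by (rule valid_frameI) (auto intro: sat_persistent[OF F])
next
  case (ax_orI1 a b) show ?case by (rule valid_frameI) simp
next
  case (ax_orI2 a b) show ?case by (rule valid_frameI) simp
next
  case (ax_orE a c b)
  show ?case
  proof (rule valid_frameI, simp only: sat.simps, intro ballI impI)
    fix V :: "nat \<Rightarrow> _" and x y z w
    assume "y \<in> X" "z \<in> X" "w \<in> X" "le y z" "le z w"
      and "sat X le R V w a \<or> sat X le R V w b"
      and "\<forall>u\<in>X. le y u \<longrightarrow> sat X le R V u a \<longrightarrow> sat X le R V u c"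
      and "\<forall>u\<in>X. le z u \<longrightarrow> sat X le R V u b \<longrightarrow> sat X le R V u c"
    then show "sat X le R V w c"
      using cond_frame_refl[OF F, of w] cond_frame_trans[OF F, of y z w] by blast
  qed
next
  case (ax_efq a) show ?case by (rule valid_frameI) simp
next
  case ax_CM show ?case by (rule valid_frameI) (auto simp: Iff_def)
next
  case ax_CN show ?case by (rule valid_frameI) (auto simp: Iff_def Top_def)
next
  case (ax_Gamma g) then show ?case using assms(2) by blast
next
  case (subst_rule a s)
  show ?case
  proof (rule valid_frameI)
    fix V :: "nat \<Rightarrow> _" and x assume V: "\<forall>n. upset X le (V n)" and "x \<in> X"
    moreover have "\<forall>n. upset X le {z\<in>X. sat X le R V z (s n)}"
      using upset_truth_set[OF F V] by blast
    ultimately show "sat X le R V x (subst s a)"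
      using sat_subst[OF F V] valid_frameD[OF subst_rule.IH] by simp
  qed
next
  case (mp a b) then show ?case using cond_frame_refl[OF F] unfolding valid_frame_def by simp
next
  case (cong_left a b c)
  then show ?case
    using valid_frame_Iff_truth_set[OF F] by (intro valid_frameI) (simp add: Iff_def)
next
  case (cong_right a b c)
  show ?case
  proof (rule valid_frameI)
    fix V :: "nat \<Rightarrow> _" and x assume V: "\<forall>n. upset X le (V n)" and "x \<in> X"
    have "sat X le R V y a \<longleftrightarrow> sat X le R V y b" if "R {z\<in>X. sat X le R V z c} u y" for u y
      using valid_frame_Iff_truth_set[OF F cong_right.IH V]
        cond_frame_R_in_carrier[OF F upset_truth_set[OF F V] that] by blast
    then show "sat X le R V x (Iff (Cond c a) (Cond c b))" unfolding Iff_def by auto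
  qed
qed

lemma impcond_frame_R:
  "impcond_frame X le R \<Longrightarrow> upset X le a \<Longrightarrow> x \<in> X \<Longrightarrow> R a x y \<Longrightarrow> le x y \<and> y \<in> a"
  unfolding impcond_frame_def by blast

lemma valid_frame_axImpCond:
  assumes IF: "impcond_frame X le R"
  shows "valid_frame X le R axImpCond"
proof (rule valid_frameI)
  fix V :: "nat \<Rightarrow> _" and x assume V: "\<forall>n. upset X le (V n)" and "x \<in> X"
  then have "upset X le (V 0)" and "V 0 \<subseteq> X" and V0: "{z\<in>X. z \<in> V 0} = V 0"
    unfolding upset_def by auto
  then show "sat X le R V x axImpCond"
    unfolding axImpCond_def using impcond_frame_R[OF IF \<open>upset X le (V 0)\<close>] by (auto simp: V0)
qed

theorem valid_frame_ICK_axImpCond: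
  assumes "\<phi> \<in> ICK {axImpCond}" and IF: "impcond_frame X le R"
  shows "valid_frame X le R \<phi>"
proof (rule valid_frame_ICK[OF _ _ assms(1)])
  show "cond_frame X le R" using IF unfolding impcond_frame_def by blast
  show "\<forall>g\<in>{axImpCond}. valid_frame X le R g" using valid_frame_axImpCond[OF IF] by blast
qed

section \<open>Derivability from assumptions and prime theories\<close>

inductive derivable :: "fm set \<Rightarrow> fm set \<Rightarrow> fm \<Rightarrow> bool" for \<Gamma> S where
  derivable_ICK: "a \<in> ICK \<Gamma> \<Longrightarrow> derivable \<Gamma> S a"
| derivable_assm: "a \<in> S \<Longrightarrow> derivable \<Gamma> S a"
| derivable_mp: "derivable \<Gamma> S (Imp a b) \<Longrightarrow> derivable \<Gamma> S a \<Longrightarrow> derivable \<Gamma> S b"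

lemma ICK_Imp_self: "Imp a a \<in> ICK \<Gamma>"
  using ICK.mp[OF ICK.mp[OF ICK.ax_S ICK.ax_K] ICK.ax_K] .

lemma derivable_deduction: "derivable \<Gamma> (insert a S) b \<Longrightarrow> derivable \<Gamma> S (Imp a b)"
proof (induction rule: derivable.induct)
  case (derivable_ICK c)
  then show ?case
    using derivable.derivable_mp[OF derivable.derivable_ICK[OF ICK.ax_K] derivable.derivable_ICK]
    by blast
next
  case (derivable_assm c)
  then show ?case
    using derivable.derivable_mp[OF derivable.derivable_ICK[OF ICK.ax_K] derivable.derivable_assm]
      derivable.derivable_ICK[OF ICK_Imp_self] by auto
next
  case (derivable_mp c d)
  then show ?case
    using derivable.derivable_mp[OF derivable.derivable_mp[OF derivable.derivable_ICK[OF ICK.ax_S]]]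
    by blast
qed

lemma derivable_mono:
  assumes "derivable \<Gamma> S a" and "S \<subseteq> T"
  shows "derivable \<Gamma> T a"
  using assms(1)
proof induction
  case (derivable_ICK a) then show ?case by (rule derivable.derivable_ICK)
next
  case (derivable_assm a) then show ?case using assms(2) by (simp add: derivable.derivable_assm subsetD)
next
  case (derivable_mp a b) from derivable_mp.IH show ?case by (rule derivable.derivable_mp)
qed

lemma derivable_finite: "derivable \<Gamma> S a \<Longrightarrow> \<exists>F. finite F \<and> F \<subseteq> S \<and> derivable \<Gamma> F a"
proof (induction rule: derivable.induct)
  case (derivable_ICK a)
  then show ?case by (intro exI[of _ "{}"]) (simp add: derivable.derivable_ICK)
next
  case (derivable_assm a)
  then show ?case by (intro exI[of _ "{a}"]) (simp add: derivable.derivable_assm)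
next
  case (derivable_mp a b)
  then obtain F G where "finite F" "F \<subseteq> S" "derivable \<Gamma> F (Imp a b)"
    and "finite G" "G \<subseteq> S" "derivable \<Gamma> G a" by blast
  then have "derivable \<Gamma> (F \<union> G) (Imp a b)" and "derivable \<Gamma> (F \<union> G) a"
    using derivable_mono by blast+
  then show ?case
    using \<open>finite F\<close> \<open>finite G\<close> \<open>F \<subseteq> S\<close> \<open>G \<subseteq> S\<close>
    by (intro exI[of _ "F \<union> G"]) (simp add: derivable.derivable_mp)
qed

definition is_theory :: "fm set \<Rightarrow> fm set \<Rightarrow> bool" where
  "is_theory \<Gamma> S \<longleftrightarrow> ICK \<Gamma> \<subseteq> S \<and> (\<forall>a b. Imp a b \<in> S \<longrightarrow> a \<in> S \<longrightarrow> b \<in> S)"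

definition prime_theory :: "fm set \<Rightarrow> fm set \<Rightarrow> bool" where
  "prime_theory \<Gamma> S \<longleftrightarrow> is_theory \<Gamma> S \<and> Bot \<notin> S \<and> (\<forall>a b. Or a b \<in> S \<longrightarrow> a \<in> S \<or> b \<in> S)"

lemma theory_ICK: "is_theory \<Gamma> S \<Longrightarrow> a \<in> ICK \<Gamma> \<Longrightarrow> a \<in> S"
  unfolding is_theory_def by blast

lemma theory_mp: "is_theory \<Gamma> S \<Longrightarrow> Imp a b \<in> S \<Longrightarrow> a \<in> S \<Longrightarrow> b \<in> S"
  unfolding is_theory_def by blast

lemma theory_derivable:
  assumes "is_theory \<Gamma> S" and "derivable \<Gamma> S a"
  shows "a \<in> S"
  using assms(2)
proof induction
  case (derivable_ICK a) then show ?case by (rule theory_ICK[OF assms(1)])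
next
  case (derivable_assm a) then show ?case .
next
  case (derivable_mp a b) from derivable_mp.IH show ?case by (rule theory_mp[OF assms(1)])
qed

lemma is_theory_ICK: "is_theory \<Gamma> (ICK \<Gamma>)"
  unfolding is_theory_def using ICK.mp by blast

lemma derivable_empty: "derivable \<Gamma> {} a \<Longrightarrow> a \<in> ICK \<Gamma>"
  using theory_derivable[OF is_theory_ICK] derivable_mono by blast

lemma derivable_Union_chain:
  assumes "C \<noteq> {}" and "subset.chain {T. \<not> derivable \<Gamma> T \<psi>} C"
  shows "\<not> derivable \<Gamma> (\<Union>C) \<psi>"
proof
  assume "derivable \<Gamma> (\<Union>C) \<psi>"
  then obtain F where "finite F" "F \<subseteq> \<Union>C" "derivable \<Gamma> F \<psi>"
    using derivable_finite by metis
  obtain T where "T \<in> C" "F \<subseteq> T"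
    using finite_subset_Union_chain[OF \<open>finite F\<close> \<open>F \<subseteq> \<Union>C\<close> assms] .
  have "derivable \<Gamma> T \<psi>"
    by (rule derivable_mono[OF \<open>derivable \<Gamma> F \<psi>\<close> \<open>F \<subseteq> T\<close>])
  moreover have "\<not> derivable \<Gamma> T \<psi>"
    using assms(2) \<open>T \<in> C\<close> unfolding subset.chain_def by blast
  ultimately show False by blast
qed

lemma maximal_nonderiving_prime_theory:
  assumes M: "\<not> derivable \<Gamma> M \<psi>" and maximal: "\<And>c. c \<notin> M \<Longrightarrow> derivable \<Gamma> (insert c M) \<psi>"
  shows "prime_theory \<Gamma> M"
proof -
  have derives_Imp: "derivable \<Gamma> M (Imp c \<psi>)" if "c \<notin> M" for c
    using derivable_deduction[OF maximal[OF that]] .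
  have closed: "c \<in> M" if "derivable \<Gamma> M c" for c
  proof (rule ccontr)
    assume "c \<notin> M"
    with M show False using derivable_mp[OF derives_Imp that] by blast
  qed
  have "is_theory \<Gamma> M"
    unfolding is_theory_def
    using closed[OF derivable_ICK] closed[OF derivable_mp[OF derivable_assm derivable_assm]] by blast
  moreover have "Bot \<notin> M"
  proof
    assume "Bot \<in> M"
    with M show False using derivable_mp[OF derivable_ICK[OF ICK.ax_efq] derivable_assm] by blast
  qed
  moreover have "a \<in> M \<or> b \<in> M" if "Or a b \<in> M" for a b
  proof (rule ccontr)
    assume "\<not> (a \<in> M \<or> b \<in> M)"
    then have "derivable \<Gamma> M (Imp (Or a b) \<psi>)"
      using derivable_mp[OF derivable_mp[OF derivable_ICK[OF ICK.ax_orE] derives_Imp] derives_Imp]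
      by blast
    with M show False using derivable_mp[OF _ derivable_assm[OF that]] by blast
  qed
  ultimately show ?thesis unfolding prime_theory_def by blast
qed

theorem lindenbaum:
  assumes "\<not> derivable \<Gamma> S \<psi>"
  obtains M where "S \<subseteq> M" and "prime_theory \<Gamma> M" and "\<psi> \<notin> M"
proof -
  let ?A = "{T. \<not> derivable \<Gamma> T \<psi>} \<inter> {T. S \<subseteq> T}"
  have "\<exists>M\<in>?A. \<forall>T\<in>?A. M \<subseteq> T \<longrightarrow> T = M"
  proof (rule subset_Zorn_nonempty)
    show "?A \<noteq> {}" using assms by blast
  next
    fix C assume "C \<noteq> {}" and "subset.chain ?A C"
    then have "subset.chain {T. \<not> derivable \<Gamma> T \<psi>} C" and "S \<subseteq> \<Union>C"
      unfolding subset.chain_def by blast+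
    then show "\<Union>C \<in> ?A" using derivable_Union_chain[OF \<open>C \<noteq> {}\<close>] by blast
  qed
  then obtain M where "S \<subseteq> M" and M: "\<not> derivable \<Gamma> M \<psi>"
    and max: "\<And>T. \<not> derivable \<Gamma> T \<psi> \<Longrightarrow> M \<subseteq> T \<Longrightarrow> T = M"
    by auto
  have "derivable \<Gamma> (insert c M) \<psi>" if "c \<notin> M" for c
    using max[of "insert c M"] that by blast
  then have "prime_theory \<Gamma> M"
    by (rule maximal_nonderiving_prime_theory[OF M])
  moreover have "\<psi> \<notin> M"
    using M derivable_assm by blast
  ultimately show thesis using that \<open>S \<subseteq> M\<close> by blast
qed

lemma prime_theory_separates_Imp:
  assumes S: "is_theory \<Gamma> S" and "Imp a b \<notin> S"
  obtains M where "prime_theory \<Gamma> M" and "S \<subseteq> M" and "a \<in> M" and "b \<notin> M"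
proof -
  have "\<not> derivable \<Gamma> (insert a S) b"
    using theory_derivable[OF S derivable_deduction] assms(2) by blast
  then obtain M where "insert a S \<subseteq> M" "prime_theory \<Gamma> M" "b \<notin> M"
    by (rule lindenbaum)
  then show thesis using that by blast
qed

lemma theory_And_iff: "is_theory \<Gamma> S \<Longrightarrow> And a b \<in> S \<longleftrightarrow> a \<in> S \<and> b \<in> S"
  using theory_mp[OF _ theory_ICK[OF _ ICK.ax_andE1]] theory_mp[OF _ theory_ICK[OF _ ICK.ax_andE2]]
    theory_mp[OF _ theory_mp[OF _ theory_ICK[OF _ ICK.ax_andI]]] by blast

lemma prime_theory_Or_iff: "prime_theory \<Gamma> S \<Longrightarrow> Or a b \<in> S \<longleftrightarrow> a \<in> S \<or> b \<in> S"
  unfolding prime_theory_def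
  using theory_mp[OF _ theory_ICK[OF _ ICK.ax_orI1]] theory_mp[OF _ theory_ICK[OF _ ICK.ax_orI2]]
  by blast

lemma theory_Iff: "is_theory \<Gamma> S \<Longrightarrow> Iff a b \<in> ICK \<Gamma> \<Longrightarrow> a \<in> S \<longleftrightarrow> b \<in> S"
  unfolding Iff_def using theory_And_iff theory_ICK theory_mp by blast

lemma ICK_IffI: "Imp a b \<in> ICK \<Gamma> \<Longrightarrow> Imp b a \<in> ICK \<Gamma> \<Longrightarrow> Iff a b \<in> ICK \<Gamma>"
  unfolding Iff_def using ICK.mp[OF ICK.mp[OF ICK.ax_andI]] by blast

lemma ICK_Cond_And: "Iff (Cond a (And b c)) (And (Cond a b) (Cond a c)) \<in> ICK \<Gamma>"
  using ICK.subst_rule[OF ICK.ax_CM, where s = "\<lambda>n. if n = 0 then a else if n = 1 then b else c"]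
  by (simp add: Iff_def)

lemma ICK_Imp_Cond:
  assumes "axImpCond \<in> \<Gamma>"
  shows "Imp (Imp a b) (Cond a b) \<in> ICK \<Gamma>"
  using ICK.subst_rule[OF ICK.ax_Gamma[OF assms], where s = "\<lambda>n. if n = 0 then a else b"]
  by (simp add: axImpCond_def)

text \<open>Together with CM and right congruence, this closes \<open>{\<theta>. Cond a \<theta> \<in> S}\<close> under modus ponens.\<close>
lemma ICK_And_mp_Iff: "Iff (And (Imp p q) p) (And q (And (Imp p q) p)) \<in> ICK \<Gamma>"
proof (rule ICK_IffI)
  let ?A = "And (Imp p q) p"
  have "derivable \<Gamma> {?A} ?A" by (simp add: derivable_assm)
  then have "derivable \<Gamma> {?A} (Imp p q)" and "derivable \<Gamma> {?A} p"
    using derivable_mp[OF derivable_ICK[OF ICK.ax_andE1]]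
      derivable_mp[OF derivable_ICK[OF ICK.ax_andE2]] by blast+
  then have "derivable \<Gamma> {?A} (And q ?A)"
    using derivable_mp[OF derivable_mp[OF derivable_ICK[OF ICK.ax_andI]]] \<open>derivable \<Gamma> {?A} ?A\<close>
      derivable_mp by blast
  then have "derivable \<Gamma> {} (Imp ?A (And q ?A))"
    by (intro derivable_deduction) simp
  then show "Imp ?A (And q ?A) \<in> ICK \<Gamma>"
    by (rule derivable_empty)
qed (rule ICK.ax_andE2)

lemma theory_Cond_mp:
  assumes S: "is_theory \<Gamma> S" and "Cond a (Imp p q) \<in> S" and "Cond a p \<in> S"
  shows "Cond a q \<in> S"
proof -
  have "Cond a (And (Imp p q) p) \<in> S"
    using assms theory_Iff[OF S ICK_Cond_And] theory_And_iff[OF S] by blast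
  then have "Cond a (And q (And (Imp p q) p)) \<in> S"
    using theory_Iff[OF S ICK.cong_right[OF ICK_And_mp_Iff]] by blast
  then show ?thesis
    using theory_Iff[OF S ICK_Cond_And] theory_And_iff[OF S] by blast
qed

lemma Cond_successor_theory:
  assumes "axImpCond \<in> \<Gamma>" and S: "is_theory \<Gamma> S"
  shows "is_theory \<Gamma> {\<theta>. Cond a \<theta> \<in> S}" and "S \<subseteq> {\<theta>. Cond a \<theta> \<in> S}" and "Cond a a \<in> S"
proof -
  have Imp_Cond: "Cond a \<theta> \<in> S" if "Imp a \<theta> \<in> S" for \<theta>
    using theory_mp[OF S theory_ICK[OF S ICK_Imp_Cond[OF assms(1)]] that] .
  show "S \<subseteq> {\<theta>. Cond a \<theta> \<in> S}"
    using Imp_Cond theory_mp[OF S theory_ICK[OF S ICK.ax_K]] by blast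
  then show "is_theory \<Gamma> {\<theta>. Cond a \<theta> \<in> S}"
    unfolding is_theory_def using theory_Cond_mp[OF S] theory_ICK[OF S] by blast
  show "Cond a a \<in> S"
    using Imp_Cond theory_ICK[OF S ICK_Imp_self] by blast
qed

section \<open>The canonical model\<close>

definition canon_worlds :: "fm set \<Rightarrow> fm set set" where
  "canon_worlds \<Gamma> = {M. prime_theory \<Gamma> M}"

definition canon_truth :: "fm set \<Rightarrow> fm \<Rightarrow> fm set set" where
  "canon_truth \<Gamma> \<phi> = {M \<in> canon_worlds \<Gamma>. \<phi> \<in> M}"

definition canon_R :: "fm set \<Rightarrow> fm set set \<Rightarrow> fm set \<Rightarrow> fm set \<Rightarrow> bool" where
  "canon_R \<Gamma> a x y \<longleftrightarrow> x \<in> canon_worlds \<Gamma> \<and> y \<in> canon_worlds \<Gamma> \<and> x \<subseteq> y \<and> y \<in> a \<and>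
     (\<forall>\<phi> \<theta>. a = canon_truth \<Gamma> \<phi> \<longrightarrow> Cond \<phi> \<theta> \<in> x \<longrightarrow> \<theta> \<in> y)"

definition canon_val :: "fm set \<Rightarrow> nat \<Rightarrow> fm set set" where
  "canon_val \<Gamma> n = canon_truth \<Gamma> (Var n)"

abbreviation canon_sat :: "fm set \<Rightarrow> fm set \<Rightarrow> fm \<Rightarrow> bool" where
  "canon_sat \<Gamma> \<equiv> sat (canon_worlds \<Gamma>) (\<subseteq>) (canon_R \<Gamma>) (canon_val \<Gamma>)"

lemma canon_worlds_theory: "x \<in> canon_worlds \<Gamma> \<Longrightarrow> is_theory \<Gamma> x"
  unfolding canon_worlds_def prime_theory_def by blast

lemma canon_worlds_nonempty:
  assumes "Bot \<notin> ICK \<Gamma>"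
  shows "canon_worlds \<Gamma> \<noteq> {}"
proof -
  have "\<not> derivable \<Gamma> {} Bot"
    using derivable_empty assms by blast
  then obtain M where "prime_theory \<Gamma> M"
    by (rule lindenbaum)
  then show ?thesis unfolding canon_worlds_def by blast
qed

lemma canonical_impcond_frame:
  assumes "Bot \<notin> ICK \<Gamma>"
  shows "impcond_frame (canon_worlds \<Gamma>) (\<subseteq>) (canon_R \<Gamma>)"
  unfolding impcond_frame_def cond_frame_def
proof (intro conjI allI impI ballI canon_worlds_nonempty[OF assms])
  fix a x y z assume "x \<subseteq> y" "canon_R \<Gamma> a y z" "x \<in> canon_worlds \<Gamma>" "z \<in> canon_worlds \<Gamma>"
  then have "canon_R \<Gamma> a x z" unfolding canon_R_def by blast
  then show "\<exists>w\<in>canon_worlds \<Gamma>. canon_R \<Gamma> a x w \<and> w \<subseteq> z"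
    using \<open>z \<in> canon_worlds \<Gamma>\<close> by blast
qed (auto simp: canon_R_def)

lemma canon_truth_subset_Imp:
  assumes "canon_truth \<Gamma> a \<subseteq> canon_truth \<Gamma> b"
  shows "Imp a b \<in> ICK \<Gamma>"
proof (rule ccontr)
  assume "Imp a b \<notin> ICK \<Gamma>"
  then obtain M where "prime_theory \<Gamma> M" "a \<in> M" "b \<notin> M"
    using prime_theory_separates_Imp[OF is_theory_ICK] by metis
  then show False
    using assms unfolding canon_truth_def canon_worlds_def by blast
qed

lemma canon_truth_eq_Iff: "canon_truth \<Gamma> a = canon_truth \<Gamma> b \<Longrightarrow> Iff a b \<in> ICK \<Gamma>"
  by (simp add: ICK_IffI canon_truth_subset_Imp)

lemma canon_R_Cond_witness:
  assumes "axImpCond \<in> \<Gamma>" and x: "x \<in> canon_worlds \<Gamma>" and "Cond a b \<notin> x"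
  obtains M where "canon_R \<Gamma> (canon_truth \<Gamma> a) x M" and "b \<notin> M"
proof -
  let ?U = "{\<theta>. Cond a \<theta> \<in> x}"
  have thy_x: "is_theory \<Gamma> x"
    using canon_worlds_theory[OF x] .
  note U = Cond_successor_theory[OF assms(1) thy_x, of a]
  have "\<not> derivable \<Gamma> ?U b"
    using theory_derivable[OF U(1)] assms(3) by blast
  then obtain M where "?U \<subseteq> M" and M: "prime_theory \<Gamma> M" and "b \<notin> M"
    by (rule lindenbaum)
  have "\<theta> \<in> M" if "canon_truth \<Gamma> a = canon_truth \<Gamma> \<phi>" and "Cond \<phi> \<theta> \<in> x" for \<phi> \<theta>
    using theory_Iff[OF thy_x ICK.cong_left[OF canon_truth_eq_Iff[OF that(1)]]] that(2)
      \<open>?U \<subseteq> M\<close> by blast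
  then have "canon_R \<Gamma> (canon_truth \<Gamma> a) x M"
    using x M U(2,3) \<open>?U \<subseteq> M\<close>
    unfolding canon_R_def canon_truth_def canon_worlds_def by blast
  then show thesis using that \<open>b \<notin> M\<close> by blast
qed

theorem truth_lemma:
  assumes "axImpCond \<in> \<Gamma>" and "x \<in> canon_worlds \<Gamma>"
  shows "canon_sat \<Gamma> x \<phi> \<longleftrightarrow> \<phi> \<in> x"
  using assms(2)
proof (induction \<phi> arbitrary: x)
  case (Var n) then show ?case by (simp add: canon_val_def canon_truth_def)
next
  case Bot then show ?case by (simp add: canon_worlds_def prime_theory_def)
next
  case (And a b) then show ?case
    using theory_And_iff[OF canon_worlds_theory[OF And.prems]] by simp
next
  case (Or a b) then show ?case
    using prime_theory_Or_iff by (simp add: canon_worlds_def)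
next
  case (Imp a b)
  have thy_x: "is_theory \<Gamma> x"
    using canon_worlds_theory[OF Imp.prems] .
  show ?case
  proof
    assume sat: "canon_sat \<Gamma> x (Imp a b)"
    show "Imp a b \<in> x"
    proof (rule ccontr)
      assume "Imp a b \<notin> x"
      then obtain M where "prime_theory \<Gamma> M" "x \<subseteq> M" "a \<in> M" "b \<notin> M"
        using prime_theory_separates_Imp[OF thy_x] by metis
      then show False
        using sat Imp.IH unfolding canon_worlds_def by auto
    qed
  next
    assume "Imp a b \<in> x"
    then show "canon_sat \<Gamma> x (Imp a b)"
      using Imp.IH theory_mp unfolding canon_worlds_def prime_theory_def by auto
  qed
next
  case (Cond a b)
  have truth_a: "{z \<in> canon_worlds \<Gamma>. canon_sat \<Gamma> z a} = canon_truth \<Gamma> a"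
    using Cond.IH(1) unfolding canon_truth_def by blast
  show ?case
  proof
    assume sat: "canon_sat \<Gamma> x (Cond a b)"
    show "Cond a b \<in> x"
    proof (rule ccontr)
      assume "Cond a b \<notin> x"
      then obtain M where "canon_R \<Gamma> (canon_truth \<Gamma> a) x M" and "b \<notin> M"
        using canon_R_Cond_witness[OF assms(1) Cond.prems] by metis
      then show False
        using sat Cond.IH(2) truth_a unfolding canon_R_def by auto
    qed
  next
    assume "Cond a b \<in> x"
    then show "canon_sat \<Gamma> x (Cond a b)"
      using Cond.IH(2) truth_a unfolding canon_R_def by auto
  qed
qed

theorem ICK_complete_impcond:
  assumes "axImpCond \<in> \<Gamma>" and "valid_class TYPE(fm set) \<phi>"
  shows "\<phi> \<in> ICK \<Gamma>"
proof (cases "Bot \<in> ICK \<Gamma>")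
  case True
  then show ?thesis by (rule ICK.mp[OF ICK.ax_efq])
next
  case False
  have valid: "valid_frame (canon_worlds \<Gamma>) (\<subseteq>) (canon_R \<Gamma>) \<phi>"
    using assms(2) canonical_impcond_frame[OF False] unfolding valid_class_def by blast
  have val: "\<forall>n. upset (canon_worlds \<Gamma>) (\<subseteq>) (canon_val \<Gamma> n)"
    unfolding upset_def canon_val_def canon_truth_def by blast
  have in_all: "\<phi> \<in> M" if "M \<in> canon_worlds \<Gamma>" for M
    using valid_frameD[OF valid val that] truth_lemma[OF assms(1) that] by simp
  show ?thesis
  proof (rule ccontr)
    assume "\<phi> \<notin> ICK \<Gamma>"
    then have "\<not> derivable \<Gamma> {} \<phi>"
      using derivable_empty by blast
    then obtain M where "prime_theory \<Gamma> M" and "\<phi> \<notin> M"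
      by (rule lindenbaum)
    then show False
      using in_all unfolding canon_worlds_def by blast
  qed
qed

theorem proposition5p6:
  shows "(\<forall>\<phi>. \<phi> \<in> ICK {axImpCond} \<longrightarrow> valid_class TYPE('w) \<phi>)
       \<and> (\<forall>\<phi>. valid_class TYPE(fm set) \<phi> \<longrightarrow> \<phi> \<in> ICK {axImpCond})"
proof (intro conjI allI impI)
  fix \<phi> assume "\<phi> \<in> ICK {axImpCond}"
  then show "valid_class TYPE('w) \<phi>"
    unfolding valid_class_def
    using valid_frame_ICK_axImpCond by blast
next
  fix \<phi> assume "valid_class TYPE(fm set) \<phi>"
  then show "\<phi> \<in> ICK {axImpCond}"
    by (rule ICK_complete_impcond[rotated]) simp
qed

end
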